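(* For every tournament $T$, $\Delta(T)\le 2\,\mathrm{ctw}(T)$.
   Context: A tournament is a digraph with exactly one arc between each pair of distinct vertices. For an ordering $\sigma=\langle v_1,\dots,v_n\rangle$ of $V(T)$, an arc $(v_i,v_j)$ is backward if $j<i$; $d_\sigma(v)$ is the number of backward arcs incident to $v$, $\Delta_\sigma(T)=\max_v d_\sigma(v)$, and the degreewidth is $\Delta(T)=\min_\sigma\Delta_\sigma(T)$. For each prefix $\langle v_1,\dots,v_k\rangle$ ($k\in[n]$), its cut is the set of backward arcs with head in the prefix and tail outside it; the width of $\sigma$ is the maximum size of such a cut over all prefixes, and the cutwidth $\mathrm{ctw}(T)$ is the minimum width over all orderings of $V(T)$. *)

theory Defs
  imports Main
begin

definition tournament :: "'a set \<Rightarrow> ('a \<Rightarrow> 'a \<Rightarrow> bool) \<Rightarrow> bool" where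
  "tournament V A \<longleftrightarrow> finite V
     \<and> (\<forall>u v. A u v \<longrightarrow> u \<in> V \<and> v \<in> V)
     \<and> (\<forall>v. \<not> A v v)
     \<and> (\<forall>u\<in>V. \<forall>v\<in>V. u \<noteq> v \<longrightarrow> (A u v \<longleftrightarrow> \<not> A v u))"

definition orderings :: "'a set \<Rightarrow> 'a list set" where
  "orderings V = {\<sigma>. distinct \<sigma> \<and> set \<sigma> = V}"

definition pos :: "'a list \<Rightarrow> 'a \<Rightarrow> nat" where
  "pos \<sigma> v = (LEAST i. i < length \<sigma> \<and> \<sigma> ! i = v)"

definition backward :: "('a \<Rightarrow> 'a \<Rightarrow> bool) \<Rightarrow> 'a list \<Rightarrow> 'a \<Rightarrow> 'a \<Rightarrow> bool" where
  "backward A \<sigma> u v \<longleftrightarrow> A u v \<and> u \<in> set \<sigma> \<and> v \<in> set \<sigma> \<and> pos \<sigma> v < pos \<sigma> u"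

definition bdeg :: "('a \<Rightarrow> 'a \<Rightarrow> bool) \<Rightarrow> 'a list \<Rightarrow> 'a \<Rightarrow> nat" where
  "bdeg A \<sigma> v = card {(x, y). backward A \<sigma> x y \<and> (x = v \<or> y = v)}"

definition max_bdeg :: "('a \<Rightarrow> 'a \<Rightarrow> bool) \<Rightarrow> 'a list \<Rightarrow> nat" where
  "max_bdeg A \<sigma> = Max (insert 0 (bdeg A \<sigma> ` set \<sigma>))"

definition degreewidth :: "'a set \<Rightarrow> ('a \<Rightarrow> 'a \<Rightarrow> bool) \<Rightarrow> nat" where
  "degreewidth V A = Min (max_bdeg A ` orderings V)"

definition cut :: "('a \<Rightarrow> 'a \<Rightarrow> bool) \<Rightarrow> 'a list \<Rightarrow> nat \<Rightarrow> ('a \<times> 'a) set" where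
  "cut A \<sigma> k = {(x, y). backward A \<sigma> x y \<and> y \<in> set (take k \<sigma>) \<and> x \<notin> set (take k \<sigma>)}"

definition width :: "('a \<Rightarrow> 'a \<Rightarrow> bool) \<Rightarrow> 'a list \<Rightarrow> nat" where
  "width A \<sigma> = Max (insert 0 ((\<lambda>k. card (cut A \<sigma> k)) ` {1..length \<sigma>}))"

definition cutwidth :: "'a set \<Rightarrow> ('a \<Rightarrow> 'a \<Rightarrow> bool) \<Rightarrow> nat" where
  "cutwidth V A = Min (width A ` orderings V)"

end

theory Submission
  imports Defs
begin

text \<open>Let \<open>v\<close> sit at position \<open>p\<close> of an ordering. A backward arc with head \<open>v\<close> has its tail
  after \<open>v\<close>, so it crosses the cut of the prefix of length \<open>p + 1\<close>; a backward arc with tail \<open>v\<close>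
  has its head before \<open>v\<close>, so it crosses the cut of the prefix of length \<open>p\<close>. Hence every
  backward degree is at most twice the width, and evaluating this on an ordering of minimum
  width gives the bound.\<close>

lemma pos_nth:
  assumes "distinct \<sigma>" "i < length \<sigma>"
  shows "pos \<sigma> (\<sigma> ! i) = i"
  unfolding pos_def
proof (rule Least_equality)
  show "i < length \<sigma> \<and> \<sigma> ! i = \<sigma> ! i" using assms(2) by simp
next
  fix j assume "j < length \<sigma> \<and> \<sigma> ! j = \<sigma> ! i"
  then show "i \<le> j" using assms nth_eq_iff_index_eq by fastforce
qed

lemma pos_less_length_and_nth_pos:
  assumes "distinct \<sigma>" "v \<in> set \<sigma>"
  shows "pos \<sigma> v < length \<sigma>" and "\<sigma> ! pos \<sigma> v = v"
proof -
  obtain i where "i < length \<sigma>" "\<sigma> ! i = v" using assms(2) by (auto simp: in_set_conv_nth)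
  then show "pos \<sigma> v < length \<sigma>" and "\<sigma> ! pos \<sigma> v = v" using pos_nth[OF assms(1)] by auto
qed

lemma in_set_take_iff_pos_less:
  assumes "distinct \<sigma>" "v \<in> set \<sigma>"
  shows "v \<in> set (take k \<sigma>) \<longleftrightarrow> pos \<sigma> v < k"
proof
  assume "v \<in> set (take k \<sigma>)"
  then obtain i where "i < k" "i < length \<sigma>" "\<sigma> ! i = v" by (auto simp: in_set_conv_nth)
  then show "pos \<sigma> v < k" using pos_nth[OF assms(1)] by metis
next
  assume "pos \<sigma> v < k"
  with pos_less_length_and_nth_pos[OF assms] show "v \<in> set (take k \<sigma>)"
    by (metis in_set_conv_nth length_take min_less_iff_conj nth_take)
qed

lemma finite_cut: "finite (cut A \<sigma> k)"
proof (rule finite_subset)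
  show "cut A \<sigma> k \<subseteq> set \<sigma> \<times> set \<sigma>" by (auto simp: cut_def backward_def)
qed simp

lemma card_cut_le_width:
  assumes "k \<le> length \<sigma>"
  shows "card (cut A \<sigma> k) \<le> width A \<sigma>"
proof (cases "k = 0")
  case True
  then show ?thesis by (simp add: cut_def)
next
  case False
  with assms have "k \<in> {1..length \<sigma>}" by simp
  then show ?thesis unfolding width_def by (intro Max_ge) auto
qed

lemma backward_arcs_at_subset_cuts:
  assumes "distinct \<sigma>" "v \<in> set \<sigma>"
  shows "{(x, y). backward A \<sigma> x y \<and> (x = v \<or> y = v)}
           \<subseteq> cut A \<sigma> (Suc (pos \<sigma> v)) \<union> cut A \<sigma> (pos \<sigma> v)"
proof
  fix p assume "p \<in> {(x, y). backward A \<sigma> x y \<and> (x = v \<or> y = v)}"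
  then obtain x y where p: "p = (x, y)" "backward A \<sigma> x y" "x = v \<or> y = v" by blast
  then have "pos \<sigma> y < pos \<sigma> x" by (simp add: backward_def)
  with p show "p \<in> cut A \<sigma> (Suc (pos \<sigma> v)) \<union> cut A \<sigma> (pos \<sigma> v)"
    using in_set_take_iff_pos_less[OF assms(1)] by (auto simp: cut_def backward_def)
qed

lemma bdeg_le_twice_width:
  assumes "distinct \<sigma>" "v \<in> set \<sigma>"
  shows "bdeg A \<sigma> v \<le> 2 * width A \<sigma>"
proof -
  have "bdeg A \<sigma> v \<le> card (cut A \<sigma> (Suc (pos \<sigma> v)) \<union> cut A \<sigma> (pos \<sigma> v))"
    unfolding bdeg_def using backward_arcs_at_subset_cuts[OF assms]
    by (intro card_mono) (auto simp: finite_cut)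
  also have "\<dots> \<le> card (cut A \<sigma> (Suc (pos \<sigma> v))) + card (cut A \<sigma> (pos \<sigma> v))"
    by (rule card_Un_le)
  also have "\<dots> \<le> width A \<sigma> + width A \<sigma>"
    using pos_less_length_and_nth_pos(1)[OF assms] by (intro add_mono card_cut_le_width) auto
  finally show ?thesis by simp
qed

lemma max_bdeg_le_twice_width:
  assumes "distinct \<sigma>"
  shows "max_bdeg A \<sigma> \<le> 2 * width A \<sigma>"
  unfolding max_bdeg_def using bdeg_le_twice_width[OF assms] by (auto intro!: Max.boundedI)

lemma finite_orderings:
  assumes "finite V"
  shows "finite (orderings V)"
proof (rule finite_subset)
  show "orderings V \<subseteq> {\<sigma>. set \<sigma> \<subseteq> V \<and> length \<sigma> = card V}"
    by (auto simp: orderings_def distinct_card)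
  show "finite {\<sigma>. set \<sigma> \<subseteq> V \<and> length \<sigma> = card V}"
    using assms by (rule finite_lists_length_eq)
qed

lemma orderings_nonempty:
  assumes "finite V"
  shows "orderings V \<noteq> {}"
  using finite_distinct_list[OF assms] by (auto simp: orderings_def)

lemma cutwidth_attained:
  assumes "finite V"
  obtains \<sigma> where "\<sigma> \<in> orderings V" "width A \<sigma> = cutwidth V A"
proof -
  have "cutwidth V A \<in> width A ` orderings V"
    unfolding cutwidth_def using assms finite_orderings orderings_nonempty by (intro Min_in) auto
  then show ?thesis using that by auto
qed

lemma degreewidth_le_max_bdeg:
  assumes "finite V" "\<sigma> \<in> orderings V"
  shows "degreewidth V A \<le> max_bdeg A \<sigma>"
  unfolding degreewidth_def using assms finite_orderings by (intro Min_le) auto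

theorem mainTheorem20:
  fixes V :: "'a set" and A :: "'a \<Rightarrow> 'a \<Rightarrow> bool"
  assumes "tournament V A"
  shows "degreewidth V A \<le> 2 * cutwidth V A"
proof -
  have "finite V" using assms by (simp add: tournament_def)
  then obtain \<sigma> where \<sigma>: "\<sigma> \<in> orderings V" "width A \<sigma> = cutwidth V A"
    by (rule cutwidth_attained)
  have "degreewidth V A \<le> max_bdeg A \<sigma>"
    using \<open>finite V\<close> \<sigma>(1) by (rule degreewidth_le_max_bdeg)
  also have "\<dots> \<le> 2 * width A \<sigma>"
    using \<sigma>(1) by (intro max_bdeg_le_twice_width) (simp add: orderings_def)
  finally show ?thesis using \<sigma>(2) by simp
qed

end
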